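(* Let $k\ge2$ and let $\mathcal C_1$ be the binary code with generator matrix $[I_k\ \tilde G_k]$. Then $\mathcal C_1$ has the Easy Repair Property.
   Context: $\tilde G_k$ denotes the $k\times\frac{k(k-1)}{2}$ binary matrix whose columns are all vectors of $\mathbb F_2^k$ of Hamming weight $2$. Let $g_1,\dots,g_n$ ($n=\frac{k(k+1)}2$) be the columns of $[I_k\ \tilde G_k]$; nodes are coordinates $c_1,\dots,c_n$ of codewords $c=u[I_k\ \tilde G_k]$. An erasure pattern is a set $S^e$ of erased nodes; the others are live. It is correctable if no two distinct codewords coincide on all live positions. A node $c_i$ is related to distinct nodes $c_{j_1},\dots,c_{j_\gamma}$ (all different from $c_i$) if $g_i=g_{j_1}+\dots+g_{j_\gamma}$. An erased node allows for easy repair if it is related to $\gamma\le2$ live nodes. An erasure pattern allows for easy repair if all erased nodes can be recovered by a sequence of easy repairs, where after each step the recovered node is regarded as live. A code has the Easy Repair Property if every correctable erasure pattern allows for easy repair. *)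

theory Defs
  imports Main
begin

text \<open>Vectors of F_2^k are represented by their supports (subsets of {0..<k});
  addition in F_2^k is symmetric difference of supports.\<close>

text \<open>Columns of the generator matrix [I_k  G~_k]: first the k unit vectors,
  then all weight-2 vectors of F_2^k.\<close>
definition cols :: "nat \<Rightarrow> nat set list" where
  "cols k = map (\<lambda>i. {i}) [0..<k] @ concat (map (\<lambda>b. map (\<lambda>a. {a, b}) [0..<b]) [0..<k])"

definition ncols :: "nat \<Rightarrow> nat" where
  "ncols k = length (cols k)"

definition gcol :: "nat \<Rightarrow> nat \<Rightarrow> nat set" where
  "gcol k i = cols k ! i"

definition gsum :: "nat \<Rightarrow> nat set \<Rightarrow> nat set" where
  "gsum k J = {x. odd (card {j \<in> J. x \<in> gcol k j})}"

text \<open>Codeword c = u [I_k G~_k] for message u \<subseteq> {0..<k}: c_i = <u, g_i> over F_2.\<close>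
definition codeword :: "nat \<Rightarrow> nat set \<Rightarrow> nat \<Rightarrow> bool" where
  "codeword k u i = odd (card (u \<inter> gcol k i))"

definition correctable :: "nat \<Rightarrow> nat set \<Rightarrow> bool" where
  "correctable k E \<longleftrightarrow>
     (\<forall>u \<subseteq> {0..<k}. \<forall>v \<subseteq> {0..<k}.
        (\<forall>i < ncols k. i \<notin> E \<longrightarrow> codeword k u i = codeword k v i) \<longrightarrow>
        (\<forall>i < ncols k. codeword k u i = codeword k v i))"

definition related :: "nat \<Rightarrow> nat \<Rightarrow> nat set \<Rightarrow> bool" where
  "related k i J \<longleftrightarrow> i < ncols k \<and> J \<subseteq> {0..<ncols k} \<and> i \<notin> J \<and> J \<noteq> {} \<and>
     gcol k i = gsum k J"

text \<open>Easy repair: erased nodes can be recovered one by one, each from at most 2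
  nodes that are live at that time (original live nodes or already recovered ones).
  easy_repairable k E: the erasure pattern E allows for easy repair.\<close>
inductive easy_repairable :: "nat \<Rightarrow> nat set \<Rightarrow> bool" for k where
  empty: "easy_repairable k {}"
| step: "\<lbrakk> easy_repairable k E; i < ncols k; i \<notin> E;
           J \<subseteq> {0..<ncols k} - insert i E; card J \<le> 2; related k i J \<rbrakk>
         \<Longrightarrow> easy_repairable k (insert i E)"

definition easy_repair_property :: "nat \<Rightarrow> bool" where
  "easy_repair_property k \<longleftrightarrow>
     (\<forall>E \<subseteq> {0..<ncols k}. correctable k E \<longrightarrow> easy_repairable k E)"

end

theory Submission
  imports Defs
begin

text \<open>View the nodes as the edges of the complete graph on the vertices 0, ..., k: the edge
  {a, b} carries the column e_a + e_b, where e_k = 0 (so the unit columns are the edges through k).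
  A message is a 0/1 labelling of the vertices with label 0 at k, and a codeword entry is the
  sum of the labels at the two ends of its edge.

  Two live edges ab and bc repair the erased edge ac in one easy step. If a nonempty erasure
  pattern admits no such step, "equal or joined by a live edge" is an equivalence relation.
  An erased edge joins two different classes, one of which avoids k; labelling that class by 1
  gives a nonzero codeword vanishing on all live nodes, so the pattern is not correctable.
  Since subsets of correctable patterns are correctable, repairing one node at a time recovers
  the whole pattern. The argument does not need k \<ge> 2.\<close>

definition edge_vec :: "nat \<Rightarrow> nat \<Rightarrow> nat \<Rightarrow> nat set" where
  "edge_vec k a b = {a, b} - {k}"

lemma edge_vec_commute: "edge_vec k a b = edge_vec k b a"
  unfolding edge_vec_def by auto

lemma edge_vec_triangle:
  "a \<noteq> b \<Longrightarrow> b \<noteq> c \<Longrightarrow> a \<noteq> c \<Longrightarrow>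
   edge_vec k a c = (edge_vec k a b - edge_vec k b c) \<union> (edge_vec k b c - edge_vec k a b)"
  unfolding edge_vec_def by auto

lemma edge_vec_neq: "a \<noteq> b \<Longrightarrow> b \<noteq> c \<Longrightarrow> a \<noteq> c \<Longrightarrow> edge_vec k a b \<noteq> edge_vec k b c"
  unfolding edge_vec_def by auto

lemma set_pairs:
  "set (concat (map (\<lambda>b. map (\<lambda>a. {a, b}) [0..<b]) [0..<k])) = {{a, b} | a b. a < b \<and> b < k}"
  by auto blast

lemma set_cols: "set (cols k) = (\<lambda>i. {i}) ` {0..<k} \<union> {{a, b} | a b. a < b \<and> b < k}"
  unfolding cols_def set_append set_pairs by simp

lemma distinct_pairs: "distinct (concat (map (\<lambda>b. map (\<lambda>a. {a, b}) [0..<b]) [0..<k]))"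
proof (induction k)
  case (Suc k)
  have "distinct (map (\<lambda>a. {a, k}) [0..<k])"
    by (auto simp: distinct_map inj_on_def doubleton_eq_iff)
  moreover have "set (concat (map (\<lambda>b. map (\<lambda>a. {a, b}) [0..<b]) [0..<k]))
      \<inter> set (map (\<lambda>a. {a, k}) [0..<k]) = {}"
    unfolding set_pairs by (auto simp: doubleton_eq_iff)
  ultimately have "distinct (concat (map (\<lambda>b. map (\<lambda>a. {a, b}) [0..<b]) [0..<k])
      @ map (\<lambda>a. {a, k}) [0..<k])"
    using Suc unfolding distinct_append by blast
  then show ?case by simp
qed simp

lemma distinct_cols: "distinct (cols k)"
proof -
  have "set (map (\<lambda>i. {i}) [0..<k]) \<inter> set (concat (map (\<lambda>b. map (\<lambda>a. {a, b}) [0..<b]) [0..<k])) = {}"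
    unfolding set_pairs by (auto simp: doubleton_eq_iff)
  moreover have "distinct (map (\<lambda>i. {i}) [0..<k])"
    by (simp add: distinct_map)
  ultimately show ?thesis
    unfolding cols_def distinct_append using distinct_pairs[of k] by blast
qed

lemma gcol_inject: "i < ncols k \<Longrightarrow> j < ncols k \<Longrightarrow> gcol k i = gcol k j \<Longrightarrow> i = j"
  using distinct_cols[of k] unfolding gcol_def ncols_def
  by (simp add: nth_eq_iff_index_eq)

lemma gcol_eq_edge_vec:
  assumes "i < ncols k"
  obtains a b where "a \<noteq> b" "a \<le> k" "b \<le> k" "gcol k i = edge_vec k a b"
proof -
  have "gcol k i \<in> set (cols k)"
    using assms unfolding gcol_def ncols_def by simp
  then consider a where "a < k" "gcol k i = {a}"
    | a b where "a < b" "b < k" "gcol k i = {a, b}"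
    unfolding set_cols by auto
  then show thesis
  proof cases
    case (1 a)
    then have "gcol k i = edge_vec k a k" by (auto simp: edge_vec_def)
    with 1 show thesis using that[of a k] by simp
  next
    case (2 a b)
    then have "gcol k i = edge_vec k a b" by (auto simp: edge_vec_def)
    with 2 show thesis using that[of a b] by simp
  qed
qed

lemma edge_vec_eq_gcol:
  assumes "a \<noteq> b" "a \<le> k" "b \<le> k"
  obtains i where "i < ncols k" "gcol k i = edge_vec k a b"
proof -
  have "edge_vec k a b \<in> set (cols k)"
  proof (cases "a = k \<or> b = k")
    case True
    then show ?thesis using assms unfolding set_cols edge_vec_def by auto
  next
    case False
    with assms have "a < k" "b < k" by auto
    with assms(1) have "edge_vec k a b = {min a b, max a b} \<and> min a b < max a b \<and> max a b < k"
      unfolding edge_vec_def by (auto simp: min_def max_def)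
    then show ?thesis unfolding set_cols by blast
  qed
  then obtain i where "i < length (cols k)" "cols k ! i = edge_vec k a b"
    by (auto simp: in_set_conv_nth)
  then show thesis
    using that unfolding gcol_def ncols_def by blast
qed

lemma gsum_doubleton:
  "j1 \<noteq> j2 \<Longrightarrow> gsum k {j1, j2} = (gcol k j1 - gcol k j2) \<union> (gcol k j2 - gcol k j1)"
proof -
  assume "j1 \<noteq> j2"
  moreover have "{j \<in> {j1, j2}. x \<in> gcol k j} =
      (if x \<in> gcol k j1 then {j1} else {}) \<union> (if x \<in> gcol k j2 then {j2} else {})" for x
    by auto
  ultimately show ?thesis unfolding gsum_def by auto
qed

lemma codeword_edge_vec:
  assumes "u \<subseteq> {0..<k}" "a \<noteq> b" "gcol k j = edge_vec k a b"
  shows "codeword k u j \<longleftrightarrow> (a \<in> u) \<noteq> (b \<in> u)"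
proof -
  have "u \<inter> gcol k j = u \<inter> {a, b}"
    using assms(1,3) unfolding edge_vec_def by auto
  then show ?thesis
    unfolding codeword_def using assms(2) by (cases "a \<in> u"; cases "b \<in> u") auto
qed

definition easy_step :: "nat \<Rightarrow> nat set \<Rightarrow> nat \<Rightarrow> bool" where
  "easy_step k E i \<longleftrightarrow> (\<exists>J \<subseteq> {0..<ncols k} - E. card J \<le> 2 \<and> related k i J)"

lemma easy_step_triangle:
  assumes abc: "a \<noteq> b" "b \<noteq> c" "a \<noteq> c"
    and i: "i < ncols k" "i \<in> E" "gcol k i = edge_vec k a c"
    and j1: "j1 < ncols k" "j1 \<notin> E" "gcol k j1 = edge_vec k a b"
    and j2: "j2 < ncols k" "j2 \<notin> E" "gcol k j2 = edge_vec k b c"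
  shows "easy_step k E i"
proof -
  have "j1 \<noteq> j2"
    using edge_vec_neq[OF abc] j1(3) j2(3) by auto
  then have "gcol k i = gsum k {j1, j2}"
    using gsum_doubleton edge_vec_triangle[OF abc] i(3) j1(3) j2(3) by simp
  moreover have "{j1, j2} \<subseteq> {0..<ncols k} - E" "card {j1, j2} \<le> 2" "i \<notin> {j1, j2}"
    using i(2) j1(1,2) j2(1,2) by (auto simp: card_insert_if)
  ultimately show ?thesis
    unfolding easy_step_def related_def using i(1) by blast
qed

definition live_linked :: "nat \<Rightarrow> nat set \<Rightarrow> nat \<Rightarrow> nat \<Rightarrow> bool" where
  "live_linked k E a b \<longleftrightarrow> a = b \<or> (\<exists>j < ncols k. j \<notin> E \<and> gcol k j = edge_vec k a b)"

lemma live_linked_sym: "live_linked k E a b \<Longrightarrow> live_linked k E b a"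
  unfolding live_linked_def by (metis edge_vec_commute)

lemma live_linked_trans:
  assumes no_step: "\<forall>i \<in> E. \<not> easy_step k E i"
    and "a \<le> k" "b \<le> k" "c \<le> k" "live_linked k E a b" "live_linked k E b c"
  shows "live_linked k E a c"
proof (cases "a = b \<or> b = c \<or> a = c")
  case True
  then show ?thesis using assms(5,6) unfolding live_linked_def by auto
next
  case False
  then have distinct: "a \<noteq> b" "b \<noteq> c" "a \<noteq> c" by auto
  obtain i where i: "i < ncols k" "gcol k i = edge_vec k a c"
    using edge_vec_eq_gcol[OF distinct(3) assms(2,4)] .
  obtain j1 where "j1 < ncols k" "j1 \<notin> E" "gcol k j1 = edge_vec k a b"
    using assms(5) distinct unfolding live_linked_def by auto
  moreover obtain j2 where "j2 < ncols k" "j2 \<notin> E" "gcol k j2 = edge_vec k b c"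
    using assms(6) distinct unfolding live_linked_def by auto
  ultimately have "i \<notin> E"
    using easy_step_triangle[OF distinct i(1) _ i(2)] no_step by blast
  then show ?thesis using i unfolding live_linked_def by auto
qed

lemma no_easy_step_imp_live_zero_codeword:
  assumes no_step: "\<forall>i \<in> E. \<not> easy_step k E i" and i: "i < ncols k" "i \<in> E"
  obtains u where "u \<subseteq> {0..<k}" "codeword k u i"
    "\<And>j. j < ncols k \<Longrightarrow> j \<notin> E \<Longrightarrow> \<not> codeword k u j"
proof -
  let ?R = "live_linked k E"
  have trans: "?R a b \<Longrightarrow> ?R b c \<Longrightarrow> ?R a c" if "a \<le> k" "b \<le> k" "c \<le> k" for a b c
    using live_linked_trans[OF no_step that] .
  obtain x y where xy: "x \<noteq> y" "x \<le> k" "y \<le> k" "gcol k i = edge_vec k x y"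
    using gcol_eq_edge_vec[OF i(1)] .
  have "\<not> ?R x y"
  proof
    assume "?R x y"
    then obtain j where "j < ncols k" "j \<notin> E" "gcol k j = gcol k i"
      using xy unfolding live_linked_def by auto
    then show False using gcol_inject[OF _ i(1)] i(2) by blast
  qed
  \<comment> \<open>one end of the erased edge lies outside the class of k\<close>
  obtain w z where wz: "w \<le> k" "z \<le> k" "\<not> ?R w k" "\<not> ?R w z" "gcol k i = edge_vec k w z"
  proof (cases "?R x k")
    case True
    then have "\<not> ?R y k"
      using \<open>\<not> ?R x y\<close> trans[of x k y] live_linked_sym xy(2,3) by blast
    moreover have "\<not> ?R y x" using \<open>\<not> ?R x y\<close> live_linked_sym by blast
    ultimately show thesis
      using that[of y x] xy edge_vec_commute by simp
  next
    case False
    then show thesis using that[of x y] xy \<open>\<not> ?R x y\<close> by blast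
  qed
  define u where "u = {v. v < k \<and> ?R v w}"
  have u: "u \<subseteq> {0..<k}" unfolding u_def by auto
  have in_u: "v \<in> u \<longleftrightarrow> ?R v w" if "v \<le> k" for v
    using that wz(3) live_linked_sym unfolding u_def by (auto simp: le_less)
  have "?R w w" unfolding live_linked_def by simp
  then have "w \<noteq> z" "w \<in> u" "z \<notin> u"
    using wz(4) in_u[OF wz(1)] in_u[OF wz(2)] live_linked_sym by auto
  then have "codeword k u i"
    using codeword_edge_vec[OF u _ wz(5)] by simp
  moreover have "\<not> codeword k u j" if j: "j < ncols k" "j \<notin> E" for j
  proof -
    obtain a b where ab: "a \<noteq> b" "a \<le> k" "b \<le> k" "gcol k j = edge_vec k a b"
      using gcol_eq_edge_vec[OF j(1)] .
    then have "?R a b" using j unfolding live_linked_def by auto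
    then have "?R a w \<longleftrightarrow> ?R b w"
      using trans[of a b w] trans[of b a w] live_linked_sym ab(2,3) wz(1) by blast
    then show ?thesis
      using codeword_edge_vec[OF u ab(1,4)] in_u ab(2,3) by simp
  qed
  ultimately show thesis using that u by blast
qed

lemma correctable_has_easy_step:
  assumes corr: "correctable k E" and "E \<noteq> {}" "E \<subseteq> {0..<ncols k}"
  shows "\<exists>i \<in> E. easy_step k E i"
proof (rule ccontr)
  assume "\<not> ?thesis"
  then have no_step: "\<forall>i \<in> E. \<not> easy_step k E i" by blast
  obtain i where "i \<in> E" using assms(2) by blast
  with assms(3) have i: "i \<in> E" "i < ncols k" by auto
  obtain u where u: "u \<subseteq> {0..<k}" "codeword k u i"
    and live: "\<And>j. j < ncols k \<Longrightarrow> j \<notin> E \<Longrightarrow> \<not> codeword k u j"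
    using no_easy_step_imp_live_zero_codeword[OF no_step i(2,1)] by blast
  have "\<forall>j < ncols k. j \<notin> E \<longrightarrow> codeword k u j = codeword k {} j"
    using live unfolding codeword_def by simp
  then have "codeword k u i = codeword k {} i"
    using corr u(1) i(2) unfolding correctable_def by blast
  then show False using u(2) unfolding codeword_def by simp
qed

lemma correctable_subset: "correctable k E \<Longrightarrow> E' \<subseteq> E \<Longrightarrow> correctable k E'"
  unfolding correctable_def by blast

lemma correctable_imp_easy_repairable:
  assumes "finite E"
  shows "E \<subseteq> {0..<ncols k} \<Longrightarrow> correctable k E \<Longrightarrow> easy_repairable k E"
  using assms
proof (induction E rule: finite_remove_induct)
  case empty
  show ?case by (rule easy_repairable.empty)
next
  case (remove E)
  obtain i J where i: "i \<in> E" and J: "J \<subseteq> {0..<ncols k} - E" "card J \<le> 2" "related k i J"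
    using correctable_has_easy_step[OF remove.prems(2) remove.hyps(2) remove.prems(1)]
    unfolding easy_step_def by blast
  have "easy_repairable k (E - {i})"
    using remove.IH[OF i] remove.prems correctable_subset by blast
  then have "easy_repairable k (insert i (E - {i}))"
    using J i remove.prems(1) by (intro easy_repairable.step) (auto simp: related_def)
  then show ?case using i by (simp add: insert_absorb)
qed

theorem theorem4p3:
  fixes k :: nat
  assumes "k \<ge> 2"
  shows "easy_repair_property k"
  unfolding easy_repair_property_def
  using correctable_imp_easy_repairable finite_subset by blast

end
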